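(* Let $n\ge2$. (i) For every $\delta>0$, \[ \lim_{\substack{x\to\infty\\ \{\log_2(\gamma_n x)\}\ge\delta}}\ \mathbb{P}\Big\{\frac{S_n}{n}>x\Big\}\,x\,2^{-\{\log_2(\gamma_n x)\}}=1 . \] (ii) For every $c>1$, \[ \lim_{m\to\infty}\ \sup_{\frac{2^m}{\gamma_n}+c\le x<\frac{2^{m+1}}{\gamma_n}}\ \mathbb{P}\Big\{\frac{S_n}{n}>x\Big\}\,x\,2^{-\{\log_2(\gamma_n x)\}}=1+\mathbb{P}\{S_{n-1}>nc\}>1 . \]
   Context: $X_1,X_2,\ldots$ are iid St.~Petersburg random variables: $\mathbb{P}\{X_i=2^k\}=2^{-k}$, $k\in\{1,2,\ldots\}$; $S_n=X_1+\dots+X_n$; $\gamma_n=n/2^{\lceil\log_2 n\rceil}$; $\{y\}$ denotes the fractional part of $y$. In (ii), $m$ runs over the positive integers. *)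

theory Defs
  imports "HOL-Probability.Probability"
begin

definition gam :: "nat \<Rightarrow> real" where
  "gam n = real n / 2 powr (real_of_int \<lceil>log 2 (real n)\<rceil>)"

definition normf :: "nat \<Rightarrow> real \<Rightarrow> real" where
  "normf n x = x * 2 powr (- frac (log 2 (gam n * x)))"

definition st_petersburg_iid :: "'a measure \<Rightarrow> (nat \<Rightarrow> 'a \<Rightarrow> real) \<Rightarrow> bool" where
  "st_petersburg_iid M X \<longleftrightarrow>
     prob_space M \<and>
     prob_space.indep_vars M (\<lambda>_. borel) X {1..} \<and>
     (\<forall>i\<ge>1. \<forall>k::nat\<ge>1. measure M {\<omega>\<in>space M. X i \<omega> = 2 ^ k} = 1 / 2 ^ k)"

definition partial_sum :: "(nat \<Rightarrow> 'a \<Rightarrow> real) \<Rightarrow> nat \<Rightarrow> 'a \<Rightarrow> real" where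
  "partial_sum X n \<omega> = (\<Sum>i=1..n. X i \<omega>)"

end

theory Submission
  imports Defs
begin

text \<open>Above a high level, a sum of \<open>n\<close> St. Petersburg variables is large essentially only
because a single summand is: two summands exceed \<open>a\<close> with probability \<open>O(n\<^sup>2/a\<^sup>2)\<close>, which is
negligible against the \<open>O(1/a)\<close> tails. With \<open>2\<^sup>j \<le> n x < 2\<^sup>j\<^sup>+\<^sup>1\<close> the normalisation is
\<open>normf n x = 2\<^sup>j / n\<close>, and some summand exceeds \<open>n x\<close> with probability about \<open>n / 2\<^sup>j\<close>.
In (i) the level \<open>n x\<close> stays a factor \<open>2\<^sup>\<delta>\<close> above \<open>2\<^sup>j\<close>, so the small summands cannot close
the gap and the product tends to 1. In (ii) the level is \<open>2\<^sup>k + n c\<close>: a summand equal to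
exactly \<open>2\<^sup>k\<close> now also counts, provided the other \<open>n - 1\<close> summands exceed \<open>n c\<close>, which
adds \<open>P{S\<^sub>n\<^sub>-\<^sub>1 > n c}\<close>; on each window the product is largest at the left end point.\<close>

lemma obtain_sum_remove_le_if_at_most_one_ge:
  fixes f :: "'b \<Rightarrow> real"
  assumes "finite I" "I \<noteq> {}"
    and at_most_one: "\<not> (\<exists>i\<in>I. \<exists>j\<in>I. i \<noteq> j \<and> f i \<ge> a \<and> f j \<ge> a)"
  obtains i where "i \<in> I" "(\<Sum>j\<in>I - {i}. f j) \<le> (real (card I) - 1) * a"
proof -
  obtain i where i: "i \<in> I" and others: "\<And>j. j \<in> I - {i} \<Longrightarrow> f j \<le> a"
  proof (cases "\<exists>i\<in>I. f i \<ge> a")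
    case True
    then obtain i where "i \<in> I" "f i \<ge> a" by blast
    with at_most_one that show ?thesis by force
  next
    case False
    with \<open>I \<noteq> {}\<close> that show ?thesis by force
  qed
  have "(\<Sum>j\<in>I - {i}. f j) \<le> real (card (I - {i})) * a"
    using others by (intro sum_bounded_above) auto
  also have "real (card (I - {i})) = real (card I) - 1"
    using i \<open>finite I\<close> card_gt_0_iff[of I] by auto
  finally show ?thesis using i that by blast
qed

lemma (in prob_space) prob_UN_ge_sum_minus_pairs:
  assumes "finite I" "\<And>i. i \<in> I \<Longrightarrow> A i \<in> events" "q \<ge> 0"
    and "\<And>i j. i \<in> I \<Longrightarrow> j \<in> I \<Longrightarrow> i \<noteq> j \<Longrightarrow> prob (A i \<inter> A j) \<le> q"
  shows "prob (\<Union>i\<in>I. A i) \<ge> (\<Sum>i\<in>I. prob (A i)) - real (card I)^2 * q"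
  using assms
proof (induction I rule: finite_induct)
  case empty
  then show ?case by simp
next
  case (insert a I)
  let ?U = "\<Union>i\<in>I. A i"
  have A: "A a \<in> events" "\<And>i. i \<in> I \<Longrightarrow> A i \<in> events"
    using insert.prems(1) by auto
  have "prob (A a \<inter> ?U) \<le> (\<Sum>i\<in>I. prob (A a \<inter> A i))"
    unfolding Int_UN_distrib using A insert.hyps(1) by (intro finite_measure_subadditive_finite) auto
  also have "\<dots> \<le> real (card I) * q"
    using insert.prems(3) insert.hyps(2) by (intro sum_bounded_above) auto
  finally have overlap: "prob (A a \<inter> ?U) \<le> real (card I) * q" .
  have "prob (A a \<union> ?U) = prob (A a) + prob ?U - prob (A a \<inter> ?U)"
    using A insert.hyps(1) by (intro measure_Un3) (auto simp: fmeasurable_eq_sets)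
  moreover have "prob ?U \<ge> (\<Sum>i\<in>I. prob (A i)) - real (card I)^2 * q"
    using insert.IH A insert.prems(2,3) by blast
  moreover have "real (card I)^2 * q + real (card I) * q \<le> real (card (insert a I))^2 * q"
    using insert.hyps insert.prems(2)
    by (simp add: power2_eq_square algebra_simps mult_right_mono)
  ultimately show ?case using insert.hyps overlap by simp
qed

lemma obtain_pow2_bracket:
  assumes "(y::real) \<ge> 1"
  obtains j :: nat where "2 ^ j \<le> y" "y < 2 ^ Suc j"
proof
  define j where "j = nat \<lfloor>log 2 y\<rfloor>"
  have "\<lfloor>log 2 y\<rfloor> = int j"
    using assms unfolding j_def by simp
  then have "2 powr real j \<le> y \<and> y < 2 powr (real j + 1)"
    using floor_log_eq_powr_iff[of y 2 "int j"] assms by simp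
  then show "2 ^ j \<le> y" "y < 2 ^ Suc j"
    by (simp_all add: powr_realpow[symmetric] powr_add)
qed

lemma pow2_eq_if_between:
  assumes "(2::real) ^ k < 2 * 2 ^ m" "(2::real) ^ m < 2 * 2 ^ k"
  shows "m = k"
proof -
  have "k < Suc m" "m < Suc k"
    using assms power_strict_increasing_iff[of "2::real" k "Suc m"]
      power_strict_increasing_iff[of "2::real" m "Suc k"] by simp_all
  then show ?thesis by simp
qed

lemma obtain_large_pow2_term:
  fixes f :: "nat \<Rightarrow> real"
  assumes "n \<ge> 1" "s \<ge> 0" and pow2: "\<forall>i\<in>{1..n}. \<exists>m. f i = 2 ^ m"
    and sum: "(\<Sum>i=1..n. f i) > 2 ^ k + s"
    and at_most_one: "\<not> (\<exists>i\<in>{1..n}. \<exists>j\<in>{1..n}. i \<noteq> j \<and> f i \<ge> a \<and> f j \<ge> a)"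
    and a: "a = 2 ^ k / (2 * real n)"
  obtains i where "i \<in> {1..n}" "f i \<ge> 2 ^ Suc k \<or> f i = 2 ^ k \<and> (\<Sum>j\<in>{1..n}-{i}. f j) > s"
proof -
  obtain i where i: "i \<in> {1..n}" "(\<Sum>j\<in>{1..n}-{i}. f j) \<le> (real n - 1) * a"
    by (rule obtain_sum_remove_le_if_at_most_one_ge[OF _ _ at_most_one]) (use assms(1) in auto)
  have split: "(\<Sum>j=1..n. f j) = f i + (\<Sum>j\<in>{1..n}-{i}. f j)"
    using i(1) by (simp add: sum.remove)
  have "(real n - 1) * a < 2 ^ k / 2"
    using assms(1) unfolding a by (simp add: field_simps)
  then have large: "f i > 2 ^ k / 2"
    using sum split i(2) assms(2) by auto
  obtain m where m: "f i = 2 ^ m" using pow2 i(1) by blast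
  show ?thesis
  proof (cases "f i \<ge> 2 ^ Suc k")
    case False
    then have "m = k"
      using large m by (intro pow2_eq_if_between) auto
    then show ?thesis using that i(1) split sum m by auto
  qed (use that i(1) in auto)
qed

lemma gam_eq_pow2:
  assumes "n \<ge> 1"
  shows "gam n = real n / 2 ^ nat \<lceil>log 2 (real n)\<rceil>"
proof -
  have "log 2 (real n) \<ge> 0"
    using assms by simp
  then have "\<lceil>log 2 (real n)\<rceil> \<ge> 0"
    by linarith
  then have "(2::real) powr real_of_int \<lceil>log 2 (real n)\<rceil> = 2 ^ nat \<lceil>log 2 (real n)\<rceil>"
    by (metis of_nat_nat powr_realpow zero_less_numeral)
  then show ?thesis unfolding gam_def by simp
qed

lemma
  assumes "n \<ge> 1" "x > 0" "2 ^ j \<le> real n * x" "real n * x < 2 ^ Suc j"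
  shows frac_log_gam_eq: "frac (log 2 (gam n * x)) = log 2 (real n * x) - j"
    and normf_eq_pow2: "normf n x = 2 ^ j / real n"
proof -
  define K where "K = nat \<lceil>log 2 (real n)\<rceil>"
  have nx: "real n * x > 0" using assms(1,2) by simp
  have "log 2 (gam n * x) = log 2 (real n * x / 2 ^ K)"
    unfolding gam_eq_pow2[OF assms(1)] K_def by simp
  also have "\<dots> = log 2 (real n * x) + of_int (- int K)"
    using assms(1,2) by (simp add: log_divide log_mult log_nat_power)
  finally have log_gam: "log 2 (gam n * x) = log 2 (real n * x) + of_int (- int K)" .
  have "\<lfloor>log 2 (real n * x)\<rfloor> = int j"
    using floor_log_eq_powr_iff[of "real n * x" 2 "int j"] nx assms(3,4)
    by (simp add: powr_realpow powr_add)
  then show frac: "frac (log 2 (gam n * x)) = log 2 (real n * x) - j"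
    unfolding log_gam frac_add_of_int_right by (simp add: frac_def)
  have "normf n x = x * (2 powr real j / 2 powr (log 2 (real n * x)))"
    unfolding normf_def frac by (simp add: powr_diff)
  also have "\<dots> = 2 ^ j / real n"
    using nx assms(2) by (simp add: powr_realpow)
  finally show "normf n x = 2 ^ j / real n" .
qed

section \<open>St. Petersburg variables\<close>

text \<open>\<open>P{X\<^sub>1 + \<dots> + X\<^sub>m > t}\<close>; the recursion conditions on the value \<open>2\<^sup>k\<^sup>+\<^sup>1\<close> of one summand.\<close>
primrec petersburg_tail :: "nat \<Rightarrow> real \<Rightarrow> real" where
  "petersburg_tail 0 t = (if t < 0 then 1 else 0)"
| "petersburg_tail (Suc m) t = (\<Sum>k. petersburg_tail m (t - 2 ^ Suc k) / 2 ^ Suc k)"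

locale st_petersburg = prob_space M for M :: "'a measure" +
  fixes X :: "nat \<Rightarrow> 'a \<Rightarrow> real"
  assumes indep: "indep_vars (\<lambda>_. borel) X {1..}"
    and prob_X_eq: "\<And>i k. i \<ge> 1 \<Longrightarrow> k \<ge> (1::nat) \<Longrightarrow> prob {\<omega>\<in>space M. X i \<omega> = 2 ^ k} = 1 / 2 ^ k"

lemma st_petersburg_iid_imp_st_petersburg: "st_petersburg_iid M X \<Longrightarrow> st_petersburg M X"
  unfolding st_petersburg_def st_petersburg_axioms_def st_petersburg_iid_def by blast

context st_petersburg
begin

lemma measurable_X [measurable]: "i \<ge> 1 \<Longrightarrow> X i \<in> borel_measurable M"
  using indep unfolding indep_vars_def by auto

lemma prob_X_eq_pow2: "i \<ge> 1 \<Longrightarrow> prob {\<omega>\<in>space M. X i \<omega> = 2 ^ Suc k} = 1 / 2 ^ Suc k"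
  by (rule prob_X_eq) simp_all

lemma AE_X_pow2:
  assumes "i \<ge> 1"
  shows "AE \<omega> in M. \<exists>k. X i \<omega> = 2 ^ Suc k"
proof -
  let ?A = "\<lambda>k. {\<omega>\<in>space M. X i \<omega> = 2 ^ Suc k}"
  have "(\<lambda>k. prob (?A k)) sums prob (\<Union>k. ?A k)"
    using assms by (intro finite_measure_UNION) (auto simp: disjoint_family_on_def)
  moreover have "(\<lambda>k. prob (?A k)) sums 1"
  proof -
    have p: "prob (?A k) = (1/2) * (1/2::real) ^ k" for k
      using prob_X_eq_pow2[OF assms, of k] by (simp add: power_one_over)
    have "(\<lambda>k. (1/2) * (1/2::real) ^ k) sums 1"
      using sums_mult[OF geometric_sums[of "1/2::real"], of "1/2"] by simp
    then show ?thesis unfolding p .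
  qed
  ultimately have "prob (\<Union>k. ?A k) = 1" by (simp add: sums_iff)
  moreover have "(\<Union>k. ?A k) = {\<omega>\<in>space M. \<exists>k. X i \<omega> = 2 ^ Suc k}" by auto
  moreover have "{\<omega>\<in>space M. \<exists>k. X i \<omega> = 2 ^ Suc k} \<in> events"
    using assms by measurable
  ultimately have "AE \<omega> in M. \<omega> \<in> {\<omega>\<in>space M. \<exists>k. X i \<omega> = 2 ^ Suc k}"
    by (simp add: prob_eq_1)
  then show ?thesis by (auto elim: eventually_mono)
qed

lemma AE_all_X_pow2: "AE \<omega> in M. \<forall>i\<in>{1..n}. \<exists>k. X i \<omega> = 2 ^ Suc k"
  using AE_X_pow2 by (subst AE_finite_all) auto

lemma AE_all_X_nonneg: "AE \<omega> in M. \<forall>i\<in>{1..n}. X i \<omega> \<ge> 0"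
  using AE_all_X_pow2[of n] by eventually_elim (metis zero_le_numeral zero_le_power)

lemma prob_X_le_pow2:
  assumes "i \<ge> 1"
  shows "prob {\<omega>\<in>space M. X i \<omega> \<le> 2 ^ j} = 1 - 1 / 2 ^ j"
proof -
  let ?A = "\<lambda>k. {\<omega>\<in>space M. X i \<omega> = 2 ^ Suc k}"
  have "prob {\<omega>\<in>space M. X i \<omega> \<le> 2 ^ j} = prob (\<Union>k<j. ?A k)"
  proof (rule measure_eq_AE)
    show "AE \<omega> in M. \<omega> \<in> {\<omega>\<in>space M. X i \<omega> \<le> 2 ^ j} \<longleftrightarrow> \<omega> \<in> (\<Union>k<j. ?A k)"
      using AE_X_pow2[OF assms] by eventually_elim (auto simp del: power_Suc)
  qed (use assms in measurable)
  also have "\<dots> = (\<Sum>k<j. prob (?A k))"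
    using assms by (intro finite_measure_finite_Union) (auto simp: disjoint_family_on_def)
  also have "\<dots> = (\<Sum>k<j. 1 / 2 ^ Suc k)"
    by (intro sum.cong refl prob_X_eq_pow2[OF assms])
  also have "\<dots> = 1 - 1 / 2 ^ j"
    by (induction j) (auto simp: field_simps)
  finally show ?thesis .
qed

lemma prob_X_gt_pow2:
  assumes "i \<ge> 1"
  shows "prob {\<omega>\<in>space M. X i \<omega> > 2 ^ j} = 1 / 2 ^ j"
proof -
  have "{\<omega>\<in>space M. X i \<omega> > 2 ^ j} = space M - {\<omega>\<in>space M. X i \<omega> \<le> 2 ^ j}"
    by auto
  then show ?thesis
    using assms prob_compl[of "{\<omega>\<in>space M. X i \<omega> \<le> 2 ^ j}"] prob_X_le_pow2[OF assms, of j]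
    by simp
qed

lemma prob_X_ge_pow2:
  assumes "i \<ge> 1"
  shows "prob {\<omega>\<in>space M. X i \<omega> \<ge> 2 ^ Suc j} = 1 / 2 ^ j"
proof -
  have "prob {\<omega>\<in>space M. X i \<omega> \<ge> 2 ^ Suc j} = prob {\<omega>\<in>space M. X i \<omega> > 2 ^ j}"
  proof (rule measure_eq_AE)
    show "AE \<omega> in M. \<omega> \<in> {\<omega>\<in>space M. X i \<omega> \<ge> 2 ^ Suc j} \<longleftrightarrow> \<omega> \<in> {\<omega>\<in>space M. X i \<omega> > 2 ^ j}"
      using AE_X_pow2[OF assms] by eventually_elim (auto simp del: power_Suc)
  qed (use assms in measurable)
  then show ?thesis using prob_X_gt_pow2[OF assms] by simp
qed

lemma prob_X_ge_le:
  assumes "i \<ge> 1" "y > 0"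
  shows "prob {\<omega>\<in>space M. X i \<omega> \<ge> y} \<le> 4 / y"
proof (cases "y \<le> 4")
  case True
  have "prob {\<omega>\<in>space M. X i \<omega> \<ge> y} \<le> 1" by simp
  also have "1 \<le> 4 / y" using True assms by simp
  finally show ?thesis .
next
  case False
  obtain j where j: "2 ^ j \<le> y" "y < 2 ^ Suc j"
    using obtain_pow2_bracket[of y] False by auto
  with False obtain l where "j = Suc l" by (cases j) auto
  with j have l: "2 ^ Suc l \<le> y" "y < 2 ^ Suc (Suc l)" by simp_all
  have "prob {\<omega>\<in>space M. X i \<omega> \<ge> y} \<le> prob {\<omega>\<in>space M. X i \<omega> \<ge> 2 ^ Suc l}"
    using l assms by (intro finite_measure_mono) auto
  also have "\<dots> = 1 / 2 ^ l" by (rule prob_X_ge_pow2[OF assms(1)])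
  also have "\<dots> \<le> 4 / y" using l by (simp add: field_simps)
  finally show ?thesis .
qed

lemma indep_X_sum:
  assumes "i \<ge> 1" "finite J" "J \<subseteq> {1..}" "i \<notin> J"
  shows "indep_var borel (X i) borel (\<lambda>\<omega>. \<Sum>j\<in>J. X j \<omega>)"
  using assms by (intro indep_vars_sum indep_vars_subset[OF indep]) auto

lemma prob_two_X_ge_le:
  assumes "i \<ge> 1" "j \<ge> 1" "i \<noteq> j" "a > 0"
  shows "prob {\<omega>\<in>space M. X i \<omega> \<ge> a \<and> X j \<omega> \<ge> a} \<le> 16 / a^2"
proof -
  have "indep_var borel (X i) borel (X j)"
    using indep_X_sum[of i "{j}"] assms by simp
  then have "prob {\<omega>\<in>space M. X i \<omega> \<in> {a..} \<and> X j \<omega> \<in> {a..}}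
      = prob {\<omega>\<in>space M. X i \<omega> \<in> {a..}} * prob {\<omega>\<in>space M. X j \<omega> \<in> {a..}}"
    by (rule prob_indep_random_variable) simp_all
  also have "\<dots> \<le> (4 / a) * (4 / a)"
    using prob_X_ge_le assms by (intro mult_mono) auto
  finally show ?thesis by (simp add: power2_eq_square)
qed

lemma prob_exists_two_X_ge_le:
  assumes "a > 0"
  shows "prob {\<omega>\<in>space M. \<exists>i\<in>{1..n}. \<exists>j\<in>{1..n}. i \<noteq> j \<and> X i \<omega> \<ge> a \<and> X j \<omega> \<ge> a}
    \<le> real n ^ 2 * (16 / a^2)"
proof -
  define E where "E = (\<lambda>(i, j). {\<omega>\<in>space M. i \<noteq> j \<and> X i \<omega> \<ge> a \<and> X j \<omega> \<ge> a})"
  have E_events: "E p \<in> events" if "p \<in> {1..n} \<times> {1..n}" for p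
    using that unfolding E_def by (cases p) (simp, measurable)
  have "{\<omega>\<in>space M. \<exists>i\<in>{1..n}. \<exists>j\<in>{1..n}. i \<noteq> j \<and> X i \<omega> \<ge> a \<and> X j \<omega> \<ge> a}
      = (\<Union>p\<in>{1..n} \<times> {1..n}. E p)"
    unfolding E_def by auto
  also have "prob \<dots> \<le> (\<Sum>p\<in>{1..n} \<times> {1..n}. prob (E p))"
    using E_events by (intro finite_measure_subadditive_finite) auto
  also have "\<dots> \<le> (\<Sum>p\<in>{1..n} \<times> {1..n}. 16 / a^2)"
  proof (intro sum_mono)
    fix p assume "p \<in> {1..n} \<times> {1..n}"
    then show "prob (E p) \<le> 16 / a^2"
      using prob_two_X_ge_le[of "fst p" "snd p" a] assms unfolding E_def
      by (cases "fst p = snd p") (auto split: prod.splits)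
  qed
  also have "\<dots> = real n ^ 2 * (16 / a^2)"
    by (simp add: power2_eq_square)
  finally show ?thesis .
qed

lemma prob_UN_ge_sum_if_X_ge:
  assumes "a > 0" "\<And>i. i \<in> {1..n} \<Longrightarrow> E i \<in> events"
    and "\<And>i. i \<in> {1..n} \<Longrightarrow> E i \<subseteq> {\<omega>\<in>space M. X i \<omega> \<ge> a}"
  shows "prob (\<Union>i\<in>{1..n}. E i) \<ge> (\<Sum>i=1..n. prob (E i)) - real n ^ 2 * (16 / a^2)"
proof -
  have "prob (E i \<inter> E j) \<le> 16 / a^2" if "i \<in> {1..n}" "j \<in> {1..n}" "i \<noteq> j" for i j
  proof -
    have "prob (E i \<inter> E j) \<le> prob {\<omega>\<in>space M. X i \<omega> \<ge> a \<and> X j \<omega> \<ge> a}"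
      using assms(3) that by (intro finite_measure_mono) (fastforce, measurable)
    also have "\<dots> \<le> 16 / a^2"
      using that assms(1) by (intro prob_two_X_ge_le) auto
    finally show ?thesis .
  qed
  then show ?thesis
    using prob_UN_ge_sum_minus_pairs[of "{1..n}" E "16 / a^2"] assms(2) by simp
qed

lemma prob_X_add_gt_sums:
  assumes "i \<ge> 1" and indep_Y: "indep_var borel (X i) borel Y"
  shows "(\<lambda>k. prob {\<omega>\<in>space M. Y \<omega> > t - 2 ^ Suc k} / 2 ^ Suc k)
    sums prob {\<omega>\<in>space M. X i \<omega> + Y \<omega> > t}"
proof -
  have [measurable]: "Y \<in> borel_measurable M"
    using indep_var_rv2[OF indep_Y] by simp
  define B where "B k = {\<omega>\<in>space M. X i \<omega> = 2 ^ Suc k \<and> Y \<omega> > t - 2 ^ Suc k}" for k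
  have "prob (B k) = prob {\<omega>\<in>space M. Y \<omega> > t - 2 ^ Suc k} / 2 ^ Suc k" for k
    using prob_indep_random_variable[OF indep_Y, of "{2 ^ Suc k}" "{t - 2 ^ Suc k<..}"]
      prob_X_eq_pow2[OF assms(1), of k]
    unfolding B_def by simp
  moreover have "(\<lambda>k. prob (B k)) sums prob (\<Union>k. B k)"
    unfolding B_def using assms by (intro finite_measure_UNION) (auto simp: disjoint_family_on_def)
  moreover have "prob (\<Union>k. B k) = prob {\<omega>\<in>space M. X i \<omega> + Y \<omega> > t}"
  proof (rule measure_eq_AE)
    show "AE \<omega> in M. \<omega> \<in> (\<Union>k. B k) \<longleftrightarrow> \<omega> \<in> {\<omega>\<in>space M. X i \<omega> + Y \<omega> > t}"
      using AE_X_pow2[OF assms(1)] unfolding B_def by eventually_elim auto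
  qed (unfold B_def, use assms in measurable)
  ultimately show ?thesis by simp
qed

lemma prob_sum_gt:
  assumes "finite J" "J \<subseteq> {1..}"
  shows "prob {\<omega>\<in>space M. (\<Sum>j\<in>J. X j \<omega>) > t} = petersburg_tail (card J) t"
  using assms
proof (induction J arbitrary: t rule: finite_induct)
  case empty
  then show ?case by (simp add: prob_space)
next
  case (insert i J)
  have "(\<lambda>k. petersburg_tail (card J) (t - 2 ^ Suc k) / 2 ^ Suc k)
      sums prob {\<omega>\<in>space M. X i \<omega> + (\<Sum>j\<in>J. X j \<omega>) > t}"
    using prob_X_add_gt_sums[of i "\<lambda>\<omega>. \<Sum>j\<in>J. X j \<omega>" t] indep_X_sum[of i J] insert by simp
  then show ?case using insert by (simp add: sums_iff)
qed

section \<open>Tail bounds for the sum\<close>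

lemma prob_sum_gt_le:
  assumes "n \<ge> 1" "a > 0" "2 ^ j \<le> t - (real n - 1) * a"
  shows "prob {\<omega>\<in>space M. (\<Sum>i=1..n. X i \<omega>) > t} \<le> real n / 2 ^ j + real n ^ 2 * (16 / a^2)"
proof -
  let ?U = "\<Union>i\<in>{1..n}. {\<omega>\<in>space M. X i \<omega> > 2 ^ j}"
  let ?T = "{\<omega>\<in>space M. \<exists>i\<in>{1..n}. \<exists>k\<in>{1..n}. i \<noteq> k \<and> X i \<omega> \<ge> a \<and> X k \<omega> \<ge> a}"
  have "{\<omega>\<in>space M. (\<Sum>i=1..n. X i \<omega>) > t} \<subseteq> ?U \<union> ?T"
  proof
    fix \<omega> assume \<omega>: "\<omega> \<in> {\<omega>\<in>space M. (\<Sum>i=1..n. X i \<omega>) > t}"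
    show "\<omega> \<in> ?U \<union> ?T"
    proof (cases "\<omega> \<in> ?T")
      case False
      then have one_large: "\<not> (\<exists>i\<in>{1..n}. \<exists>k\<in>{1..n}. i \<noteq> k \<and> X i \<omega> \<ge> a \<and> X k \<omega> \<ge> a)"
        using \<omega> by auto
      obtain i where i: "i \<in> {1..n}" "(\<Sum>k\<in>{1..n}-{i}. X k \<omega>) \<le> (real n - 1) * a"
        by (rule obtain_sum_remove_le_if_at_most_one_ge[OF _ _ one_large]) (use assms(1) in auto)
      have "(\<Sum>k=1..n. X k \<omega>) = X i \<omega> + (\<Sum>k\<in>{1..n}-{i}. X k \<omega>)"
        using i(1) by (simp add: sum.remove)
      then have "X i \<omega> > 2 ^ j" using \<omega> i(2) assms(3) by auto
      then show ?thesis using i(1) \<omega> by auto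
    qed simp
  qed
  then have "prob {\<omega>\<in>space M. (\<Sum>i=1..n. X i \<omega>) > t} \<le> prob (?U \<union> ?T)"
    by (intro finite_measure_mono) measurable
  also have "\<dots> \<le> prob ?U + prob ?T"
    by (intro measure_Un_le) measurable
  also have "prob ?U \<le> (\<Sum>i=1..n. prob {\<omega>\<in>space M. X i \<omega> > 2 ^ j})"
    by (intro finite_measure_subadditive_finite) auto
  also have "\<dots> = real n / 2 ^ j"
    using prob_X_gt_pow2 by simp
  also have "prob ?T \<le> real n ^ 2 * (16 / a^2)"
    by (rule prob_exists_two_X_ge_le[OF assms(2)])
  finally show ?thesis by simp
qed

lemma prob_sum_gt_ge:
  assumes "t < 2 ^ Suc j"
  shows "prob {\<omega>\<in>space M. (\<Sum>i=1..n. X i \<omega>) > t} \<ge> real n / 2 ^ j - real n ^ 2 * (16 / (2 ^ Suc j)^2)"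
proof -
  let ?E = "\<lambda>i. {\<omega>\<in>space M. X i \<omega> \<ge> 2 ^ Suc j}"
  have "(\<Sum>i=1..n. prob (?E i)) - real n ^ 2 * (16 / (2 ^ Suc j)^2) \<le> prob (\<Union>i\<in>{1..n}. ?E i)"
    by (intro prob_UN_ge_sum_if_X_ge) auto
  also have "\<dots> \<le> prob {\<omega>\<in>space M. (\<Sum>i=1..n. X i \<omega>) > t}"
  proof (rule finite_measure_mono_AE)
    show "AE \<omega> in M. \<omega> \<in> (\<Union>i\<in>{1..n}. ?E i) \<longrightarrow> \<omega> \<in> {\<omega>\<in>space M. (\<Sum>i=1..n. X i \<omega>) > t}"
      using AE_all_X_nonneg[of n]
    proof eventually_elim
      case (elim \<omega>)
      show ?case
      proof
        assume "\<omega> \<in> (\<Union>i\<in>{1..n}. ?E i)"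
        then obtain i where i: "i \<in> {1..n}" "\<omega> \<in> space M" "X i \<omega> \<ge> 2 ^ Suc j" by auto
        have "X i \<omega> \<le> (\<Sum>k=1..n. X k \<omega>)"
          using elim i(1) by (intro member_le_sum) auto
        then show "\<omega> \<in> {\<omega>\<in>space M. (\<Sum>i=1..n. X i \<omega>) > t}" using assms i by auto
      qed
    qed
  qed measurable
  finally show ?thesis using prob_X_ge_pow2 by simp
qed

lemma prob_X_eq_and_rest_gt:
  assumes "i \<in> {1..n}" "k \<ge> 1"
  shows "prob {\<omega>\<in>space M. X i \<omega> = 2 ^ k \<and> (\<Sum>j\<in>{1..n}-{i}. X j \<omega>) > s}
    = petersburg_tail (n - 1) s / 2 ^ k"
proof -
  have "indep_var borel (X i) borel (\<lambda>\<omega>. \<Sum>j\<in>{1..n}-{i}. X j \<omega>)"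
    using assms by (intro indep_X_sum) auto
  then have "prob {\<omega>\<in>space M. X i \<omega> \<in> {2 ^ k} \<and> (\<Sum>j\<in>{1..n}-{i}. X j \<omega>) \<in> {s<..}}
      = prob {\<omega>\<in>space M. X i \<omega> \<in> {2 ^ k}} * prob {\<omega>\<in>space M. (\<Sum>j\<in>{1..n}-{i}. X j \<omega>) \<in> {s<..}}"
    by (rule prob_indep_random_variable) simp_all
  moreover have "prob {\<omega>\<in>space M. (\<Sum>j\<in>{1..n}-{i}. X j \<omega>) > s} = petersburg_tail (n - 1) s"
    using assms by (subst prob_sum_gt) auto
  ultimately show ?thesis
    using prob_X_eq assms by simp
qed

lemma prob_sum_gt_pow2_le:
  assumes "n \<ge> 1" "k \<ge> 1" "s \<ge> 0"
  shows "prob {\<omega>\<in>space M. (\<Sum>i=1..n. X i \<omega>) > 2 ^ k + s}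
    \<le> real n / 2 ^ k + real n * petersburg_tail (n - 1) s / 2 ^ k
      + real n ^ 2 * (16 / (2 ^ k / (2 * real n))^2)"
proof -
  define a where "a = 2 ^ k / (2 * real n)"
  have "a > 0"
    using assms(1) unfolding a_def by simp
  let ?U1 = "\<Union>i\<in>{1..n}. {\<omega>\<in>space M. X i \<omega> \<ge> 2 ^ Suc k}"
  let ?U2 = "\<Union>i\<in>{1..n}. {\<omega>\<in>space M. X i \<omega> = 2 ^ k \<and> (\<Sum>j\<in>{1..n}-{i}. X j \<omega>) > s}"
  let ?T = "{\<omega>\<in>space M. \<exists>i\<in>{1..n}. \<exists>j\<in>{1..n}. i \<noteq> j \<and> X i \<omega> \<ge> a \<and> X j \<omega> \<ge> a}"
  have "prob {\<omega>\<in>space M. (\<Sum>i=1..n. X i \<omega>) > 2 ^ k + s} \<le> prob (?U1 \<union> ?U2 \<union> ?T)"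
  proof (rule finite_measure_mono_AE)
    show "AE \<omega> in M. \<omega> \<in> {\<omega>\<in>space M. (\<Sum>i=1..n. X i \<omega>) > 2 ^ k + s} \<longrightarrow> \<omega> \<in> ?U1 \<union> ?U2 \<union> ?T"
      using AE_all_X_pow2[of n]
    proof eventually_elim
      case (elim \<omega>)
      show ?case
      proof
        assume \<omega>: "\<omega> \<in> {\<omega>\<in>space M. (\<Sum>i=1..n. X i \<omega>) > 2 ^ k + s}"
        show "\<omega> \<in> ?U1 \<union> ?U2 \<union> ?T"
        proof (cases "\<omega> \<in> ?T")
          case False
          then have at_most_one: "\<not> (\<exists>i\<in>{1..n}. \<exists>j\<in>{1..n}. i \<noteq> j \<and> X i \<omega> \<ge> a \<and> X j \<omega> \<ge> a)"
            using \<omega> by auto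
          have pow2: "\<forall>i\<in>{1..n}. \<exists>m. X i \<omega> = 2 ^ m"
            using elim by blast
          obtain i where "i \<in> {1..n}"
            "X i \<omega> \<ge> 2 ^ Suc k \<or> X i \<omega> = 2 ^ k \<and> (\<Sum>j\<in>{1..n}-{i}. X j \<omega>) > s"
            by (rule obtain_large_pow2_term[OF _ _ pow2 _ at_most_one a_def]) (use assms \<omega> in auto)
          then show ?thesis using \<omega> by auto
        qed simp
      qed
    qed
  qed measurable
  also have "\<dots> \<le> prob ?U1 + prob ?U2 + prob ?T"
    using measure_Un_le[of "?U1 \<union> ?U2" M ?T] measure_Un_le[of ?U1 M ?U2] by simp
  also have "prob ?U1 \<le> (\<Sum>i=1..n. prob {\<omega>\<in>space M. X i \<omega> \<ge> 2 ^ Suc k})"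
    by (intro finite_measure_subadditive_finite) auto
  also have "\<dots> = real n / 2 ^ k"
    using prob_X_ge_pow2 by simp
  also have "prob ?U2 \<le> (\<Sum>i=1..n. prob {\<omega>\<in>space M. X i \<omega> = 2 ^ k \<and> (\<Sum>j\<in>{1..n}-{i}. X j \<omega>) > s})"
    by (intro finite_measure_subadditive_finite) auto
  also have "\<dots> = real n * petersburg_tail (n - 1) s / 2 ^ k"
    using prob_X_eq_and_rest_gt assms(2) by simp
  also have "prob ?T \<le> real n ^ 2 * (16 / a^2)"
    by (rule prob_exists_two_X_ge_le[OF \<open>a > 0\<close>])
  finally show ?thesis unfolding a_def by simp
qed

lemma prob_sum_gt_pow2_ge:
  assumes "k \<ge> 1" "s < 2 ^ k"
  shows "prob {\<omega>\<in>space M. (\<Sum>i=1..n. X i \<omega>) > 2 ^ k + s}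
    \<ge> real n / 2 ^ k + real n * petersburg_tail (n - 1) s / 2 ^ k - real n ^ 2 * (16 / (2 ^ k)^2)"
proof -
  define E where "E i = {\<omega>\<in>space M. X i \<omega> \<ge> 2 ^ Suc k}
    \<union> {\<omega>\<in>space M. X i \<omega> = 2 ^ k \<and> (\<Sum>j\<in>{1..n}-{i}. X j \<omega>) > s}" for i
  have prob_E: "prob (E i) = 1 / 2 ^ k + petersburg_tail (n - 1) s / 2 ^ k" if "i \<in> {1..n}" for i
  proof -
    have "prob (E i) = prob {\<omega>\<in>space M. X i \<omega> \<ge> 2 ^ Suc k}
        + prob {\<omega>\<in>space M. X i \<omega> = 2 ^ k \<and> (\<Sum>j\<in>{1..n}-{i}. X j \<omega>) > s}"
      unfolding E_def using that by (intro finite_measure_Union) (auto, measurable)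
    then show ?thesis
      using prob_X_ge_pow2 prob_X_eq_and_rest_gt that assms(1) by simp
  qed
  have "(\<Sum>i=1..n. prob (E i)) - real n ^ 2 * (16 / (2 ^ k)^2) \<le> prob (\<Union>i\<in>{1..n}. E i)"
    unfolding E_def by (intro prob_UN_ge_sum_if_X_ge) (auto intro: order_trans[of _ "2 * 2 ^ k"], measurable)
  also have "\<dots> \<le> prob {\<omega>\<in>space M. (\<Sum>i=1..n. X i \<omega>) > 2 ^ k + s}"
  proof (rule finite_measure_mono_AE)
    show "AE \<omega> in M. \<omega> \<in> (\<Union>i\<in>{1..n}. E i) \<longrightarrow> \<omega> \<in> {\<omega>\<in>space M. (\<Sum>i=1..n. X i \<omega>) > 2 ^ k + s}"
      using AE_all_X_nonneg[of n]
    proof eventually_elim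
      case (elim \<omega>)
      show ?case
      proof
        assume "\<omega> \<in> (\<Union>i\<in>{1..n}. E i)"
        then obtain i where i: "i \<in> {1..n}" "\<omega> \<in> E i" by auto
        have split: "(\<Sum>j=1..n. X j \<omega>) = X i \<omega> + (\<Sum>j\<in>{1..n}-{i}. X j \<omega>)"
          using i(1) by (simp add: sum.remove)
        have "(\<Sum>j\<in>{1..n}-{i}. X j \<omega>) \<ge> 0"
          using elim by (intro sum_nonneg) auto
        then show "\<omega> \<in> {\<omega>\<in>space M. (\<Sum>i=1..n. X i \<omega>) > 2 ^ k + s}"
          using i(2) split assms(2) unfolding E_def by auto
      qed
    qed
  qed measurable
  finally show ?thesis
    using prob_E by (simp add: field_simps)
qed

lemma prob_sum_gt_pos:
  assumes "n \<ge> 1"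
  shows "prob {\<omega>\<in>space M. (\<Sum>i=1..n. X i \<omega>) > t} > 0"
proof -
  obtain j where j: "t < 2 ^ j"
    using real_arch_pow[of 2 t] by auto
  have "0 < prob {\<omega>\<in>space M. X 1 \<omega> > 2 ^ j}"
    using prob_X_gt_pow2[of 1 j] by simp
  also have "\<dots> \<le> prob {\<omega>\<in>space M. (\<Sum>i=1..n. X i \<omega>) > t}"
  proof (rule finite_measure_mono_AE)
    show "AE \<omega> in M. \<omega> \<in> {\<omega>\<in>space M. X 1 \<omega> > 2 ^ j} \<longrightarrow> \<omega> \<in> {\<omega>\<in>space M. (\<Sum>i=1..n. X i \<omega>) > t}"
      using AE_all_X_nonneg[of n]
    proof eventually_elim
      case (elim \<omega>)
      have "X 1 \<omega> \<le> (\<Sum>i=1..n. X i \<omega>)"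
        using elim assms by (intro member_le_sum) auto
      then show ?case using j by auto
    qed
  qed measurable
  finally show ?thesis .
qed

section \<open>The normalised tail\<close>

lemma prob_mean_gt_normf_bounds:
  assumes n: "n \<ge> 1" and "\<delta> > 0" and x: "x \<ge> 1" and frac: "frac (log 2 (gam n * x)) \<ge> \<delta>"
  defines "g \<equiv> prob {\<omega>\<in>space M. partial_sum X n \<omega> / real n > x} * normf n x"
  shows "1 - 8 / x \<le> g \<and> g \<le> 1 + 16 * real n ^ 2 / (1 - 2 powr - \<delta>)^2 / x"
proof -
  define r where "r = (2::real) powr (- \<delta>)"
  have r: "0 < r" "r < 1"
    unfolding r_def using \<open>\<delta> > 0\<close> by (simp_all add: powr_less_one)
  have nx: "real n * x \<ge> 1"
    using mult_mono[of 1 "real n" 1 x] n x by simp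
  obtain j where j: "2 ^ j \<le> real n * x" "real n * x < 2 ^ Suc j"
    using obtain_pow2_bracket[OF nx] by blast
  have npos: "real n > 0" using n by simp
  have x0: "x > 0" using x by simp
  have "real j \<le> log 2 (real n * x) - \<delta>"
    using frac frac_log_gam_eq[OF n x0 j] by simp
  then have "2 powr real j \<le> 2 powr (log 2 (real n * x) - \<delta>)"
    by simp
  also have "\<dots> = r * (real n * x)"
    unfolding r_def using nx by (simp add: powr_diff powr_minus divide_inverse)
  finally have jr: "2 ^ j \<le> r * (real n * x)"
    by (simp add: powr_realpow)
  define P where "P = prob {\<omega>\<in>space M. (\<Sum>i=1..n. X i \<omega>) > real n * x}"
  have g: "g = P * (2 ^ j / real n)"
    unfolding g_def P_def partial_sum_def normf_eq_pow2[OF n x0 j] using npos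
    by (simp add: pos_less_divide_eq mult.commute)
  have "r * x \<le> x"
    using r x0 by (intro mult_left_le_one_le) auto
  then have "2 ^ j \<le> real n * x - (real n - 1) * ((1 - r) * x)"
    using jr by (simp add: algebra_simps)
  then have "P \<le> real n / 2 ^ j + real n ^ 2 * (16 / ((1 - r) * x)^2)"
    unfolding P_def using r x n by (intro prob_sum_gt_le) auto
  then have "g \<le> (real n / 2 ^ j + real n ^ 2 * (16 / ((1 - r) * x)^2)) * (2 ^ j / real n)"
    unfolding g using npos by (intro mult_right_mono) auto
  also have "\<dots> = 1 + 16 * real n * 2 ^ j / ((1 - r) * x)^2"
    using npos by (simp add: field_simps power2_eq_square)
  also have "\<dots> \<le> 1 + 16 * real n * (real n * x) / ((1 - r) * x)^2"
    using j(1) npos by (intro add_left_mono divide_right_mono mult_left_mono) auto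
  also have "\<dots> = 1 + 16 * real n ^ 2 / (1 - r)^2 / x"
    unfolding power_mult_distrib using x0 by (simp add: power2_eq_square)
  finally have upper: "g \<le> 1 + 16 * real n ^ 2 / (1 - r)^2 / x" .
  have "P \<ge> real n / 2 ^ j - real n ^ 2 * (16 / (2 ^ Suc j)^2)"
    unfolding P_def using j(2) by (rule prob_sum_gt_ge)
  then have "g \<ge> (real n / 2 ^ j - real n ^ 2 * (16 / (2 ^ Suc j)^2)) * (2 ^ j / real n)"
    unfolding g using npos by (intro mult_right_mono) auto
  moreover have "(real n / 2 ^ j - real n ^ 2 * (16 / (2 ^ Suc j)^2)) * (2 ^ j / real n)
      = 1 - 4 * (real n / 2 ^ j)"
    using npos by (simp add: field_simps power2_eq_square)
  moreover have "real n / 2 ^ j \<le> 2 / x"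
    using j(2) x by (simp add: field_simps)
  ultimately have lower: "g \<ge> 1 - 8 / x" by linarith
  show ?thesis using upper lower unfolding r_def by simp
qed

lemma tendsto_prob_mean_gt_normf:
  assumes n: "n \<ge> 1" and "\<delta> > 0"
  shows "((\<lambda>x. prob {\<omega>\<in>space M. partial_sum X n \<omega> / real n > x} * normf n x) \<longlongrightarrow> 1)
    (at_top \<sqinter> principal {x. frac (log 2 (gam n * x)) \<ge> \<delta>})"
proof -
  define C where "C = 16 * real n ^ 2 / (1 - 2 powr - \<delta>)^2"
  let ?g = "\<lambda>x. prob {\<omega>\<in>space M. partial_sum X n \<omega> / real n > x} * normf n x"
  let ?F = "at_top \<sqinter> principal {x. frac (log 2 (gam n * x)) \<ge> \<delta>}"
  have ev: "eventually (\<lambda>x. 1 - 8 / x \<le> ?g x \<and> ?g x \<le> 1 + C / x) ?F"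
    unfolding eventually_inf_principal
    using eventually_ge_at_top[of "1::real"]
    by eventually_elim (use prob_mean_gt_normf_bounds[OF n \<open>\<delta> > 0\<close>] C_def in auto)
  have zero: "((\<lambda>x::real. a / x) \<longlongrightarrow> 0) ?F" for a
    by (rule tendsto_mono[OF inf_le1
          tendsto_divide_0[OF tendsto_const filterlim_at_top_imp_at_infinity[OF filterlim_ident]]])
  have "((\<lambda>x::real. 1 - 8 / x) \<longlongrightarrow> 1 - 0) ?F" "((\<lambda>x::real. 1 + C / x) \<longlongrightarrow> 1 + 0) ?F"
    by (intro tendsto_diff tendsto_add tendsto_const zero)+
  then show ?thesis
    using tendsto_sandwich[of "\<lambda>x. 1 - 8 / x" ?g ?F "\<lambda>x. 1 + C / x" 1] ev
    by (simp add: eventually_conj_iff)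
qed

lemma SUP_prob_mean_gt_normf_window:
  assumes n: "n \<ge> 1" and "c > 0" and "real n * c < 2 ^ k" and k: "k = m + nat \<lceil>log 2 (real n)\<rceil>"
  shows "(SUP x\<in>{2 ^ m / gam n + c ..< 2 ^ (m + 1) / gam n}.
      prob {\<omega>\<in>space M. partial_sum X n \<omega> / real n > x} * normf n x)
    = prob {\<omega>\<in>space M. (\<Sum>i=1..n. X i \<omega>) > 2 ^ k + real n * c} * (2 ^ k / real n)"
proof -
  have npos: "real n > 0" using n by simp
  define W where "W = {2 ^ k / real n + c ..< 2 * 2 ^ k / real n}"
  define L where "L = 2 ^ k / real n + c"
  define g where "g x = prob {\<omega>\<in>space M. (\<Sum>i=1..n. X i \<omega>) > real n * x} * (2 ^ k / real n)" for x
  have window: "{2 ^ m / gam n + c ..< 2 ^ (m + 1) / gam n} = W"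
    unfolding W_def gam_eq_pow2[OF n] k by (simp add: power_add mult.assoc)
  have "prob {\<omega>\<in>space M. partial_sum X n \<omega> / real n > x} * normf n x = g x" if "x \<in> W" for x
  proof -
    have "real n * c > 0" using \<open>c > 0\<close> npos by simp
    then have nx: "2 ^ k \<le> real n * x" "real n * x < 2 ^ Suc k"
      using that npos unfolding W_def by (auto simp: field_simps)
    then have "real n * x > 0"
      by (smt (verit) zero_less_power)
    then have "x > 0" using npos by (simp add: zero_less_mult_iff)
    then show ?thesis
      unfolding g_def partial_sum_def normf_eq_pow2[OF n \<open>x > 0\<close> nx] using npos
      by (simp add: pos_less_divide_eq mult.commute)
  qed
  then have "(SUP x\<in>{2 ^ m / gam n + c ..< 2 ^ (m + 1) / gam n}.
      prob {\<omega>\<in>space M. partial_sum X n \<omega> / real n > x} * normf n x) = (SUP x\<in>W. g x)"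
    unfolding window by (rule SUP_cong[OF refl])
  also have "\<dots> = g L"
  proof (rule cSup_eq_maximum)
    have "L \<in> W"
      using assms(3) npos unfolding L_def W_def by (simp add: field_simps)
    then show "g L \<in> g ` W" by blast
    fix y assume "y \<in> g ` W"
    then obtain x where x: "x \<in> W" "y = g x" by blast
    then have "real n * L \<le> real n * x"
      using npos unfolding W_def L_def by simp
    then have "prob {\<omega>\<in>space M. (\<Sum>i=1..n. X i \<omega>) > real n * x}
        \<le> prob {\<omega>\<in>space M. (\<Sum>i=1..n. X i \<omega>) > real n * L}"
      by (intro finite_measure_mono) (auto, measurable)
    then show "y \<le> g L"
      unfolding x(2) g_def using npos by (intro mult_right_mono) auto
  qed
  also have "\<dots> = prob {\<omega>\<in>space M. (\<Sum>i=1..n. X i \<omega>) > 2 ^ k + real n * c} * (2 ^ k / real n)"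
  proof -
    have "real n * L = 2 ^ k + real n * c"
      unfolding L_def using npos by (simp add: field_simps)
    then show ?thesis unfolding g_def by simp
  qed
  finally show ?thesis .
qed

lemma SUP_prob_mean_gt_normf_window_bounds:
  assumes n: "n \<ge> 1" and "c > 0" and "real n * c < 2 ^ k" and "k \<ge> 1"
    and "k = m + nat \<lceil>log 2 (real n)\<rceil>"
  defines "h \<equiv> SUP x\<in>{2 ^ m / gam n + c ..< 2 ^ (m + 1) / gam n}.
      prob {\<omega>\<in>space M. partial_sum X n \<omega> / real n > x} * normf n x"
    and "Q \<equiv> petersburg_tail (n - 1) (real n * c)"
  shows "1 + Q - 16 * real n / 2 ^ k \<le> h \<and> h \<le> 1 + Q + 64 * real n ^ 3 / 2 ^ k"
proof -
  define N :: real where "N = 2 ^ k"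
  have N0: "N > 0" unfolding N_def by simp
  have npos: "real n > 0" using n by simp
  have h: "h = prob {\<omega>\<in>space M. (\<Sum>i=1..n. X i \<omega>) > N + real n * c} * (N / real n)"
    unfolding h_def N_def using assms(2-5) by (intro SUP_prob_mean_gt_normf_window[OF n])
  have "prob {\<omega>\<in>space M. (\<Sum>i=1..n. X i \<omega>) > N + real n * c}
      \<le> real n / N + real n * Q / N + real n ^ 2 * (16 / (N / (2 * real n))^2)"
    unfolding N_def Q_def using assms(2,4) by (intro prob_sum_gt_pow2_le n) simp_all
  then have "h \<le> (real n / N + real n * Q / N + real n ^ 2 * (16 / (N / (2 * real n))^2)) * (N / real n)"
    unfolding h using N0 npos by (intro mult_right_mono) auto
  also have "\<dots> = 1 + Q + 64 * real n ^ 3 / N"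
    using N0 npos by (simp add: field_simps power2_eq_square power3_eq_cube)
  finally have upper: "h \<le> 1 + Q + 64 * real n ^ 3 / N" .
  have "prob {\<omega>\<in>space M. (\<Sum>i=1..n. X i \<omega>) > N + real n * c}
      \<ge> real n / N + real n * Q / N - real n ^ 2 * (16 / N^2)"
    unfolding N_def Q_def using assms(3,4) by (intro prob_sum_gt_pow2_ge)
  then have "h \<ge> (real n / N + real n * Q / N - real n ^ 2 * (16 / N^2)) * (N / real n)"
    unfolding h using N0 npos by (intro mult_right_mono) auto
  moreover have "(real n / N + real n * Q / N - real n ^ 2 * (16 / N^2)) * (N / real n)
      = 1 + Q - 16 * real n / N"
    using N0 npos by (simp add: field_simps power2_eq_square)
  ultimately have lower: "h \<ge> 1 + Q - 16 * real n / N" by simp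
  show ?thesis using upper lower unfolding N_def by simp
qed

lemma LIMSEQ_SUP_prob_mean_gt_normf:
  assumes n: "n \<ge> 1" and "c > 0"
  shows "(\<lambda>m. SUP x\<in>{2 ^ m / gam n + c ..< 2 ^ (m + 1) / gam n}.
      prob {\<omega>\<in>space M. partial_sum X n \<omega> / real n > x} * normf n x)
    \<longlonglongrightarrow> 1 + prob {\<omega>\<in>space M. partial_sum X (n - 1) \<omega> > real n * c}"
proof -
  define K where "K = nat \<lceil>log 2 (real n)\<rceil>"
  define Q where "Q = petersburg_tail (n - 1) (real n * c)"
  have Q: "prob {\<omega>\<in>space M. partial_sum X (n - 1) \<omega> > real n * c} = Q"
    unfolding partial_sum_def Q_def using prob_sum_gt[of "{1..n - 1}"] by simp
  obtain m0 where m0: "real n * c < 2 ^ m0"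
    using real_arch_pow[of 2 "real n * c"] by auto
  let ?h = "\<lambda>m. SUP x\<in>{2 ^ m / gam n + c ..< 2 ^ (m + 1) / gam n}.
      prob {\<omega>\<in>space M. partial_sum X n \<omega> / real n > x} * normf n x"
  have bounds: "1 + Q - 16 * real n / 2 ^ (m + K) \<le> ?h m \<and> ?h m \<le> 1 + Q + 64 * real n ^ 3 / 2 ^ (m + K)"
    if "m \<ge> Suc m0" for m
  proof (rule SUP_prob_mean_gt_normf_window_bounds[OF n \<open>c > 0\<close>, of "m + K", unfolded Q_def[symmetric]])
    have "(2::real) ^ m0 \<le> 2 ^ (m + K)"
      using that by (intro power_increasing) auto
    then show "real n * c < 2 ^ (m + K)" using m0 by linarith
  qed (use that K_def in auto)
  have zero: "(\<lambda>m. a / 2 ^ (m + K) :: real) \<longlonglongrightarrow> 0" for a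
  proof -
    have "(\<lambda>m. a / 2 ^ K * (1 / 2 :: real) ^ m) \<longlonglongrightarrow> a / 2 ^ K * 0"
      by (intro tendsto_mult tendsto_const LIMSEQ_realpow_zero) simp_all
    then show ?thesis by (simp add: power_add power_one_over field_simps)
  qed
  have "(\<lambda>m. 1 + Q - 16 * real n / 2 ^ (m + K)) \<longlonglongrightarrow> 1 + Q - 0"
    "(\<lambda>m. 1 + Q + 64 * real n ^ 3 / 2 ^ (m + K)) \<longlonglongrightarrow> 1 + Q + 0"
    by (intro tendsto_diff tendsto_add tendsto_const zero)+
  moreover have "eventually (\<lambda>m. 1 + Q - 16 * real n / 2 ^ (m + K) \<le> ?h m \<and>
      ?h m \<le> 1 + Q + 64 * real n ^ 3 / 2 ^ (m + K)) sequentially"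
    unfolding eventually_sequentially using bounds by blast
  ultimately show ?thesis
    unfolding Q using tendsto_sandwich[of "\<lambda>m. 1 + Q - 16 * real n / 2 ^ (m + K)" ?h sequentially
        "\<lambda>m. 1 + Q + 64 * real n ^ 3 / 2 ^ (m + K)" "1 + Q"]
    by (simp add: eventually_conj_iff)
qed

end

theorem theorem2:
  fixes M :: "'a measure" and X :: "nat \<Rightarrow> 'a \<Rightarrow> real" and n :: nat
  assumes iid: "st_petersburg_iid M X"
    and n2: "n \<ge> 2"
  shows "(\<forall>\<delta>::real>0.
            ((\<lambda>x. measure M {\<omega>\<in>space M. partial_sum X n \<omega> / real n > x} * normf n x)
              \<longlongrightarrow> 1) (at_top \<sqinter> principal {x. frac (log 2 (gam n * x)) \<ge> \<delta>}))
       \<and> (\<forall>c::real>1.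
            (\<lambda>m::nat. SUP x\<in>{2 ^ m / gam n + c ..< 2 ^ (m + 1) / gam n}.
                 measure M {\<omega>\<in>space M. partial_sum X n \<omega> / real n > x} * normf n x)
              \<longlonglongrightarrow> 1 + measure M {\<omega>\<in>space M. partial_sum X (n - 1) \<omega> > real n * c}
            \<and> 1 + measure M {\<omega>\<in>space M. partial_sum X (n - 1) \<omega> > real n * c} > 1)"
proof -
  interpret st_petersburg M X
    using iid by (rule st_petersburg_iid_imp_st_petersburg)
  have n1: "n \<ge> 1" using n2 by simp
  have "prob {\<omega>\<in>space M. partial_sum X (n - 1) \<omega> > t} > 0" for t
    unfolding partial_sum_def using n2 by (intro prob_sum_gt_pos) simp
  then show ?thesis
    using tendsto_prob_mean_gt_normf[OF n1] LIMSEQ_SUP_prob_mean_gt_normf[OF n1] by simp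
qed

end
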